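(* For every positive integer $n$, the number of quasi-Stirling permutations $\pi$ of size $n$ with $\operatorname{des}(\pi)=n$ is equal to $(n+1)^{n-1}$.
   Context: A quasi-Stirling permutation of size $n$ is a sequence $\pi=\pi_1\pi_2\cdots\pi_{2n}$ that is a permutation of the multiset $\{1,1,2,2,\dots,n,n\}$ and avoids the patterns $1212$ and $2121$, i.e. there are no indices $i<j<k<\ell$ with $\pi_i=\pi_k$ and $\pi_j=\pi_\ell$. For a sequence $\pi=\pi_1\cdots\pi_r$ of positive integers, an index $i\in\{1,\dots,r\}$ is a descent if $\pi_i>\pi_{i+1}$ or $i=r$ (so the last position always counts as a descent), and $\operatorname{des}(\pi)$ is the number of descents. *)

theory Defs
  imports Main "HOL-Library.Multiset"
begin

definition is_perm_of_double_multiset :: "nat \<Rightarrow> nat list \<Rightarrow> bool" where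
  "is_perm_of_double_multiset n \<pi> \<longleftrightarrow> mset \<pi> = (\<Sum>i\<in>{1..n}. {#i, i#})"

definition avoids_1212_2121 :: "nat list \<Rightarrow> bool" where
  "avoids_1212_2121 \<pi> \<longleftrightarrow>
     \<not> (\<exists>i j k l. i < j \<and> j < k \<and> k < l \<and> l < length \<pi> \<and>
            \<pi> ! i = \<pi> ! k \<and> \<pi> ! j = \<pi> ! l)"

definition quasi_stirling :: "nat \<Rightarrow> nat list \<Rightarrow> bool" where
  "quasi_stirling n \<pi> \<longleftrightarrow> is_perm_of_double_multiset n \<pi> \<and> avoids_1212_2121 \<pi>"

text \<open>Descents: positions i (1-based, 1..r) with pi_i > pi_(i+1), or i = r.
  In 0-based indexing: i < r - 1 with pi!i > pi!(i+1), or i = r - 1.\<close>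
definition des :: "nat list \<Rightarrow> nat" where
  "des \<pi> = card {i. i < length \<pi> \<and> (i = length \<pi> - 1 \<or> \<pi> ! i > \<pi> ! (i + 1))}"

end

theory Submission
  imports Defs "HOL-Library.FuncSet" "HOL-Library.Product_Lexorder"
begin

(* Cutting a word at the second occurrence of its first letter r shows that quasi-Stirling
   permutations are the noncrossing words r \<sigma> r \<tau> with noncrossing \<sigma>, \<tau> on disjoint alphabets.
   Along this decomposition the descents of the cyclic word q \<pi> (for q = 0 exactly the descents
   of \<pi>) are at most the number of letters of \<pi>, with equality iff both parts are extremal and
   the first letter of \<tau> follows r in the cyclic order of the values read downwards from q.
   Making r a child of q and the letters of \<sigma> descendants of r turns the extremal words
   bijectively into trees on the letters and q, rooted at q: the cyclic order just fixes the
   order of the children. So the count is the number (n + 1) ^ (n - 1) of trees on {0..n}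
   rooted at 0, the case k = 1 of the formula k (m + k) ^ (m - 1) for forests on m vertices
   attached to k roots, which follows by removing the vertices adjacent to the roots. *)

section \<open>Forests and the generalised Cayley formula\<close>

inductive reaches :: "('a \<Rightarrow> 'a) \<Rightarrow> 'a set \<Rightarrow> 'a set \<Rightarrow> 'a \<Rightarrow> bool" for f M P where
  reaches_here: "x \<in> P \<Longrightarrow> reaches f M P x"
| reaches_step: "x \<in> M \<Longrightarrow> reaches f M P (f x) \<Longrightarrow> reaches f M P x"

(* The parent maps of the forests on the vertex set M whose roots are attached to vertices in P. *)
definition forests :: "'a set \<Rightarrow> 'a set \<Rightarrow> ('a \<Rightarrow> 'a) set" where
  "forests M P = {f \<in> M \<rightarrow>\<^sub>E M \<union> P. \<forall>x\<in>M. reaches f M P x}"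

lemma reaches_cong: "reaches g M P x \<Longrightarrow> (\<And>y. y \<in> M \<Longrightarrow> f y = g y) \<Longrightarrow> reaches f M P x"
  by (induction rule: reaches.induct) (auto intro: reaches.intros)

lemma reaches_mono: "reaches f M P x \<Longrightarrow> M \<subseteq> M' \<Longrightarrow> reaches f M' P x"
  by (induction rule: reaches.induct) (auto intro: reaches.intros)

lemma reaches_trans:
  "reaches f M P x \<Longrightarrow> (\<And>p. p \<in> P \<Longrightarrow> reaches f M Q p) \<Longrightarrow> reaches f M Q x"
  by (induction rule: reaches.induct) (auto intro: reaches.intros)

lemma reaches_exit: "reaches f M P x \<Longrightarrow> x \<notin> P \<Longrightarrow> \<exists>y\<in>M. f y \<in> P"
  by (induction rule: reaches.induct) auto

lemma not_reaches_from_closed: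
  "reaches f M P x \<Longrightarrow> x \<in> B \<Longrightarrow> (\<And>y. y \<in> B \<inter> M \<Longrightarrow> f y \<in> B) \<Longrightarrow> B \<inter> P = {} \<Longrightarrow> False"
  by (induction rule: reaches.induct) auto

lemma reaches_restrict:
  "reaches f M P x \<Longrightarrow> x \<in> E \<Longrightarrow> (\<And>y. y \<in> E \<Longrightarrow> f y \<in> E \<union> P) \<Longrightarrow> reaches (restrict f E) E P x"
proof (induction rule: reaches.induct)
  case (reaches_step x)
  have "f x \<in> E \<union> P" using reaches_step.prems by blast
  then have "reaches (restrict f E) E P (f x)"
  proof
    assume "f x \<in> E"
    then show ?thesis using reaches_step.IH reaches_step.prems(2) by blast
  qed (rule reaches_here)
  then have "reaches (restrict f E) E P (restrict f E x)" using reaches_step.prems(1) by simp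
  then show ?case by (rule reaches.reaches_step[OF reaches_step.prems(1)])
qed (rule reaches_here)

lemma reaches_top_layer:
  assumes "reaches f M P x" "x \<in> M" "f \<in> M \<rightarrow> M \<union> P" "M \<inter> P = {}"
  shows "reaches f (M - {y \<in> M. f y \<in> P}) {y \<in> M. f y \<in> P} x"
  using assms by (induction rule: reaches.induct) (auto intro: reaches.intros)

lemma reaches_override_on:
  assumes "reaches g (M - J) J x" "x \<in> M" "J \<subseteq> M" "h \<in> J \<rightarrow> P" "g \<in> M - J \<rightarrow> M"
  shows "reaches (override_on g h J) M P x"
  using assms
proof (induction rule: reaches.induct)
  case (reaches_here x)
  then have "reaches (override_on g h J) M P (override_on g h J x)"
    by (auto intro: reaches.reaches_here)
  then show ?case using reaches_here by (auto intro: reaches_step)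
next
  case (reaches_step x)
  then have "reaches (override_on g h J) M P (override_on g h J x)" by auto
  then show ?case using reaches_step by (auto intro: reaches.reaches_step)
qed

lemma forests_empty: "forests {} P = {\<lambda>_. undefined}"
  by (auto simp: forests_def)

lemma forests_no_roots: "M \<noteq> {} \<Longrightarrow> forests M {} = {}"
  by (auto simp: forests_def dest: reaches_exit)

lemma finite_forests: "finite M \<Longrightarrow> finite P \<Longrightarrow> finite (forests M P)"
  unfolding forests_def by (rule finite_subset[of _ "M \<rightarrow>\<^sub>E M \<union> P"]) (auto intro: finite_PiE)

lemma override_on_in_forests:
  assumes "J \<subseteq> M" "h \<in> J \<rightarrow>\<^sub>E P" "g \<in> forests (M - J) J"
  shows "override_on g h J \<in> forests M P"
proof -
  have g: "g \<in> (M - J) \<rightarrow>\<^sub>E M" "\<forall>x\<in>M - J. reaches g (M - J) J x"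
    using assms(1,3) by (auto simp: forests_def PiE_def Pi_def)
  have "reaches g (M - J) J x" if "x \<in> M" for x
    using that g(2) by (cases "x \<in> J") (auto intro: reaches_here)
  then have "\<forall>x\<in>M. reaches (override_on g h J) M P x"
    using assms(1,2) g(1) by (auto intro: reaches_override_on)
  moreover have "override_on g h J \<in> M \<rightarrow>\<^sub>E M \<union> P"
    using assms(1,2) g(1) by (auto simp: override_on_def PiE_def Pi_def extensional_def)
  ultimately show ?thesis by (simp add: forests_def)
qed

lemma forest_below_top_layer:
  assumes "f \<in> forests M P" "M \<inter> P = {}"
  defines "J \<equiv> {x \<in> M. f x \<in> P}"
  shows "restrict f (M - J) \<in> forests (M - J) J"
proof -
  have f: "f \<in> M \<rightarrow>\<^sub>E M \<union> P" "\<forall>x\<in>M. reaches f M P x" using assms(1) by (auto simp: forests_def)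
  have "reaches f (M - J) J x" if "x \<in> M - J" for x
    using reaches_top_layer[of f M P x] f that assms(2) by (auto simp: J_def)
  then have "\<forall>x\<in>M - J. reaches (restrict f (M - J)) (M - J) J x"
    using reaches_cong[of f "M - J" J _ "restrict f (M - J)"] by simp
  moreover have "restrict f (M - J) \<in> M - J \<rightarrow>\<^sub>E M - J \<union> J"
    using f(1) by (auto simp: J_def)
  ultimately show ?thesis by (simp add: forests_def)
qed

lemma bij_betw_forests_top_layer:
  assumes "J \<subseteq> M" "M \<inter> P = {}"
  shows "bij_betw (\<lambda>(h, g). override_on g h J) ((J \<rightarrow>\<^sub>E P) \<times> forests (M - J) J)
           {f \<in> forests M P. {x \<in> M. f x \<in> P} = J}"
proof (rule bij_betw_imageI)
  show "inj_on (\<lambda>(h, g). override_on g h J) ((J \<rightarrow>\<^sub>E P) \<times> forests (M - J) J)"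
  proof (rule inj_onI, clarify)
    fix h g h' g'
    assume "h \<in> J \<rightarrow>\<^sub>E P" "h' \<in> J \<rightarrow>\<^sub>E P" "g \<in> forests (M - J) J" "g' \<in> forests (M - J) J"
      and eq: "override_on g h J = override_on g' h' J"
    then have ext: "h \<in> extensional J" "h' \<in> extensional J"
      "g \<in> extensional (M - J)" "g' \<in> extensional (M - J)"
      by (auto simp: forests_def PiE_def)
    have "h x = h' x \<and> g x = g' x" for x
      using fun_cong[OF eq, of x] ext by (cases "x \<in> J") (auto simp: extensional_def)
    then show "h = h' \<and> g = g'" by auto
  qed
  show "(\<lambda>(h, g). override_on g h J) ` ((J \<rightarrow>\<^sub>E P) \<times> forests (M - J) J)
          = {f \<in> forests M P. {x \<in> M. f x \<in> P} = J}"
  proof (intro equalityI subsetI)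
    fix f assume "f \<in> (\<lambda>(h, g). override_on g h J) ` ((J \<rightarrow>\<^sub>E P) \<times> forests (M - J) J)"
    then obtain h g where hg: "h \<in> J \<rightarrow>\<^sub>E P" "g \<in> forests (M - J) J" and f: "f = override_on g h J"
      by auto
    have "g \<in> M - J \<rightarrow> M" using hg(2) assms(1) by (auto simp: forests_def)
    then have "{x \<in> M. f x \<in> P} = J" using hg(1) assms by (auto simp: f)
    then show "f \<in> {f \<in> forests M P. {x \<in> M. f x \<in> P} = J}"
      using override_on_in_forests[OF assms(1) hg] f by simp
  next
    fix f assume f: "f \<in> {f \<in> forests M P. {x \<in> M. f x \<in> P} = J}"
    then have "restrict f (M - J) \<in> forests (M - J) J"
      using forest_below_top_layer[of f M P] assms(2) by simp
    moreover have "restrict f J \<in> J \<rightarrow>\<^sub>E P" using f by auto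
    moreover have "f = override_on (restrict f (M - J)) (restrict f J) J"
      using f by (auto simp: forests_def override_on_def fun_eq_iff PiE_def extensional_def)
    ultimately show "f \<in> (\<lambda>(h, g). override_on g h J) ` ((J \<rightarrow>\<^sub>E P) \<times> forests (M - J) J)"
      by (auto intro!: image_eqI[of _ _ "(restrict f J, restrict f (M - J))"])
  qed
qed

lemma card_forests_top_layer:
  assumes "finite M" "finite P" "J \<subseteq> M" "M \<inter> P = {}"
  shows "card {f \<in> forests M P. {x \<in> M. f x \<in> P} = J} = card P ^ card J * card (forests (M - J) J)"
  using bij_betw_same_card[OF bij_betw_forests_top_layer[OF assms(3,4)]] finite_subset[OF assms(3,1)]
  by (simp add: card_cartesian_product card_funcsetE)

lemma sum_Pow_by_card:
  assumes "finite M"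
  shows "(\<Sum>J\<in>Pow M. F (card J)) = (\<Sum>j\<le>card M. of_nat (card M choose j) * (F j :: 'a :: comm_semiring_1))"
proof -
  have "(\<Sum>J\<in>Pow M. F (card J)) = (\<Sum>j\<le>card M. \<Sum>J | J \<in> Pow M \<and> card J = j. F (card J))"
    by (rule sum.group[symmetric]) (use assms in \<open>auto simp: card_mono\<close>)
  also have "\<dots> = (\<Sum>j\<le>card M. of_nat (card {J. J \<subseteq> M \<and> card J = j}) * F j)"
    by (intro sum.cong refl) (simp add: conj_commute)
  also have "\<dots> = (\<Sum>j\<le>card M. of_nat (card M choose j) * F j)"
    using n_subsets[OF assms] by simp
  finally show ?thesis .
qed

definition forest_count :: "nat \<Rightarrow> nat \<Rightarrow> nat" where
  "forest_count m k = (if m = 0 then 1 else k * (m + k) ^ (m - 1))"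

lemma forest_count_recurrence:
  "(\<Sum>j\<le>Suc m. (Suc m choose j) * (k ^ j * forest_count (Suc m - j) j)) = forest_count (Suc m) k"
proof -
  have summand: "(Suc m choose Suc i) * (k ^ Suc i * forest_count (m - i) (Suc i))
      = k * ((m choose i) * k ^ i * Suc m ^ (m - i))" if i: "i \<le> m" for i
  proof (cases "i = m")
    case False
    then obtain d where m: "m = Suc (i + d)" using i less_imp_Suc_add[of i m] by auto
    then have d: "m - i = Suc d" by simp
    have fc: "forest_count (m - i) (Suc i) = Suc i * Suc m ^ d"
      by (simp add: forest_count_def m add.commute)
    have binom: "(Suc m choose Suc i) * Suc i = Suc m * (m choose i)"
      using Suc_times_binomial_eq[of m i] by simp
    have "(Suc m choose Suc i) * (k ^ Suc i * forest_count (m - i) (Suc i))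
        = k * k ^ i * (((Suc m choose Suc i) * Suc i) * Suc m ^ d)"
      by (simp only: fc power_Suc mult_ac)
    also have "\<dots> = k * ((m choose i) * k ^ i * Suc m ^ (m - i))"
      unfolding binom d power_Suc by (simp only: mult_ac)
    finally show ?thesis .
  qed (simp add: forest_count_def)
  have "(\<Sum>j\<le>Suc m. (Suc m choose j) * (k ^ j * forest_count (Suc m - j) j))
      = (\<Sum>i\<le>m. (Suc m choose Suc i) * (k ^ Suc i * forest_count (m - i) (Suc i)))"
    by (simp only: sum.atMost_Suc_shift) (simp add: forest_count_def)
  also have "\<dots> = k * (\<Sum>i\<le>m. (m choose i) * k ^ i * Suc m ^ (m - i))"
    unfolding sum_distrib_left by (intro sum.cong refl summand) simp
  also have "\<dots> = k * (k + Suc m) ^ m"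
    unfolding binomial_ring[of k "Suc m" m] by simp
  finally show ?thesis by (simp add: forest_count_def add.commute)
qed

theorem card_forests:
  assumes "finite M" "finite P" "M \<inter> P = {}"
  shows "card (forests M P) = forest_count (card M) (card P)"
  using assms
proof (induction "card M" arbitrary: M P rule: less_induct)
  case less
  show ?case
  proof (cases "M = {}")
    case True
    then show ?thesis by (simp add: forests_empty forest_count_def)
  next
    case False
    then obtain m where m: "card M = Suc m" using less.prems(1) by (metis card_0_eq not0_implies_Suc)
    have below: "card (forests (M - J) J) = forest_count (card M - card J) (card J)"
      if J: "J \<subseteq> M" for J
    proof (cases "J = {}")
      case True
      then show ?thesis using False m by (simp add: forests_no_roots forest_count_def)
    next
      case False
      have "card (M - J) < card M"
        using J False less.prems(1) by (intro psubset_card_mono) auto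
      moreover have "(M - J) \<inter> J = {}" by blast
      ultimately show ?thesis
        using less.hyps[of "M - J" J] J finite_subset[OF J less.prems(1)] less.prems(1)
        by (simp add: card_Diff_subset)
    qed
    have "card (forests M P) = (\<Sum>J\<in>Pow M. \<Sum>f\<in>{f \<in> forests M P. {x \<in> M. f x \<in> P} = J}. 1)"
      by (simp only: card_eq_sum, rule sum.group[symmetric]) (auto simp: finite_forests less.prems)
    also have "\<dots> = (\<Sum>J\<in>Pow M. card P ^ card J * forest_count (card M - card J) (card J))"
      using less.prems by (intro sum.cong refl) (simp add: card_forests_top_layer below)
    also have "\<dots> = (\<Sum>j\<le>card M. (card M choose j) * (card P ^ j * forest_count (card M - j) j))"
      using sum_Pow_by_card[OF less.prems(1), of "\<lambda>j. card P ^ j * forest_count (card M - j) j"]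
      by simp
    also have "\<dots> = forest_count (card M) (card P)"
      unfolding m by (rule forest_count_recurrence)
    finally show ?thesis .
  qed
qed

definition descendants :: "('a \<Rightarrow> 'a) \<Rightarrow> 'a set \<Rightarrow> 'a \<Rightarrow> 'a set" where
  "descendants f M r = {x \<in> M. x \<noteq> r \<and> reaches f M {r} x}"

lemma forest_graft:
  assumes g: "g \<in> forests A {r}" and h: "h \<in> forests B P" and "p \<in> P"
    and "r \<notin> A \<union> B" "A \<inter> B = {}"
  shows "(\<lambda>x. if x = r then p else if x \<in> A then g x else h x) \<in> forests (insert r (A \<union> B)) P"
    (is "?f \<in> forests ?M P")
proof -
  have root: "reaches ?f ?M P r"
    by (rule reaches_step[OF _ reaches_here]) (use assms(3) in auto)
  have "?f \<in> ?M \<rightarrow>\<^sub>E ?M \<union> P"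
    using g h assms(3-5) by (auto simp: forests_def PiE_def Pi_def extensional_def)
  moreover have "reaches ?f ?M P x" if "x \<in> A" for x
  proof -
    have "reaches g A {r} x" using g that by (auto simp: forests_def)
    then have "reaches ?f A {r} x" by (rule reaches_cong) (use assms(4) in auto)
    then have "reaches ?f ?M {r} x" by (rule reaches_mono) auto
    then show ?thesis by (rule reaches_trans) (use root in simp)
  qed
  moreover have "reaches ?f ?M P x" if "x \<in> B" for x
  proof -
    have "reaches h B P x" using h that by (auto simp: forests_def)
    then have "reaches ?f B P x" by (rule reaches_cong) (use assms(4,5) in auto)
    then show ?thesis by (rule reaches_mono) auto
  qed
  ultimately show ?thesis using root by (auto simp: forests_def)
qed

lemma descendants_graft:
  assumes g: "g \<in> forests A {r}" and h: "h \<in> forests B P"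
    and "r \<notin> A \<union> B \<union> P" "A \<inter> B = {}" "A \<inter> P = {}"
  shows "descendants (\<lambda>x. if x = r then p else if x \<in> A then g x else h x) (insert r (A \<union> B)) r = A"
    (is "descendants ?f ?M r = A")
proof (intro equalityI subsetI)
  fix x assume "x \<in> A"
  then have "reaches g A {r} x" using g by (auto simp: forests_def)
  then have "reaches ?f A {r} x" by (rule reaches_cong) (use assms(3) in auto)
  then have "reaches ?f ?M {r} x" by (rule reaches_mono) auto
  then show "x \<in> descendants ?f ?M r" using \<open>x \<in> A\<close> assms(3) by (auto simp: descendants_def)
next
  fix x assume x: "x \<in> descendants ?f ?M r"
  show "x \<in> A"
  proof (rule ccontr)
    assume "x \<notin> A"
    then have "x \<in> B \<union> P" using x by (auto simp: descendants_def)
    moreover have "?f y \<in> B \<union> P" if "y \<in> (B \<union> P) \<inter> ?M" for y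
      using that h assms(3-5) by (auto simp: forests_def)
    ultimately show False
      using x assms(3) not_reaches_from_closed[of ?f ?M "{r}" x "B \<union> P"]
      by (auto simp: descendants_def)
  qed
qed

lemma forest_prune:
  assumes f: "f \<in> forests M P" and "r \<in> M" "M \<inter> P = {}"
  defines "D \<equiv> descendants f M r"
  shows "restrict f D \<in> forests D {r}"
    and "restrict f (M - insert r D) \<in> forests (M - insert r D) P"
proof -
  have fM: "f x \<in> M \<union> P" if "x \<in> M" for x using f that by (auto simp: forests_def)
  have down: "f x \<in> D \<union> {r}" if "x \<in> D" for x
  proof -
    have "reaches f M {r} (f x)" using that by (auto simp: D_def descendants_def elim: reaches.cases)
    then have "f x = r \<or> f x \<in> M" by (auto elim: reaches.cases)
    then show ?thesis using \<open>reaches f M {r} (f x)\<close> by (auto simp: D_def descendants_def)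
  qed
  have "reaches (restrict f D) D {r} x" if "x \<in> D" for x
    using that by (intro reaches_restrict[OF _ that down]) (auto simp: D_def descendants_def)
  then show "restrict f D \<in> forests D {r}"
    using down by (auto simp: forests_def)
  let ?E = "M - insert r D"
  have up: "f x \<in> ?E \<union> P" if "x \<in> ?E" for x
  proof -
    have "\<not> reaches f M {r} (f x)"
      using that reaches_step[of x M f "{r}"] by (auto simp: D_def descendants_def)
    then show ?thesis using fM[of x] that by (auto simp: D_def descendants_def intro: reaches_here)
  qed
  have "reaches (restrict f ?E) ?E P x" if "x \<in> ?E" for x
    using f that by (intro reaches_restrict[OF _ that up]) (auto simp: forests_def)
  then show "restrict f ?E \<in> forests ?E P"
    using up by (auto simp: forests_def)
qed

section \<open>Noncrossing words\<close>

definition each_twice :: "'a list \<Rightarrow> bool" where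
  "each_twice xs \<longleftrightarrow> (\<forall>x\<in>set xs. count (mset xs) x = 2)"

lemma is_perm_of_double_multiset_iff:
  "is_perm_of_double_multiset n \<pi> \<longleftrightarrow> set \<pi> = {1..n} \<and> each_twice \<pi>"
proof -
  have count: "count (\<Sum>i\<in>{1..n}. {#i, i#}) x = (if x \<in> {1..n} then 2 else 0)" for x
  proof -
    have "count (\<Sum>i\<in>{1..n}. {#i, i#}) x = (\<Sum>i\<in>{1..n}. if i = x then 2 else 0)"
      unfolding count_sum by (rule sum.cong) auto
    then show ?thesis by (simp add: sum.delta')
  qed
  show ?thesis
  proof
    assume m: "is_perm_of_double_multiset n \<pi>"
    have "x \<in> set \<pi> \<longleftrightarrow> x \<in> {1..n}" for x
      using count[of x] m unfolding is_perm_of_double_multiset_def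
      by (metis count_mset_0_iff zero_neq_numeral)
    then have "set \<pi> = {1..n}" by blast
    then show "set \<pi> = {1..n} \<and> each_twice \<pi>"
      using m count by (simp add: is_perm_of_double_multiset_def each_twice_def)
  next
    assume "set \<pi> = {1..n} \<and> each_twice \<pi>"
    then have "count (mset \<pi>) x = count (\<Sum>i\<in>{1..n}. {#i, i#}) x" for x
      using count by (cases "x \<in> set \<pi>") (auto simp: each_twice_def count_mset_0_iff)
    then show "is_perm_of_double_multiset n \<pi>"
      by (simp add: is_perm_of_double_multiset_def multiset_eq_iff)
  qed
qed

lemma each_twice_Cons_iff:
  assumes "r \<notin> set \<sigma>" "r \<notin> set \<tau>" "set \<sigma> \<inter> set \<tau> = {}"
  shows "each_twice (r # \<sigma> @ r # \<tau>) \<longleftrightarrow> each_twice \<sigma> \<and> each_twice \<tau>"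
proof -
  have c: "count (mset (r # \<sigma> @ r # \<tau>)) x
      = (if x = r then 2 else 0) + count (mset \<sigma>) x + count (mset \<tau>) x" for x
    by simp
  have z\<sigma>: "count (mset \<sigma>) x = 0" if "x \<notin> set \<sigma>" for x
    using that by (simp add: count_mset_0_iff)
  have z\<tau>: "count (mset \<tau>) x = 0" if "x \<notin> set \<tau>" for x
    using that by (simp add: count_mset_0_iff)
  have "count (mset (r # \<sigma> @ r # \<tau>)) x = count (mset \<sigma>) x" if "x \<in> set \<sigma>" for x
    using c[of x] z\<tau>[of x] that assms by auto
  moreover have "count (mset (r # \<sigma> @ r # \<tau>)) x = count (mset \<tau>) x" if "x \<in> set \<tau>" for x
    using c[of x] z\<sigma>[of x] that assms by auto
  moreover have "count (mset (r # \<sigma> @ r # \<tau>)) r = 2"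
    using c[of r] z\<sigma>[of r] z\<tau>[of r] assms by simp
  ultimately show ?thesis
    unfolding each_twice_def set_append set_simps by (metis Un_iff insert_iff)
qed

inductive noncrossing :: "'a list \<Rightarrow> bool" where
  noncrossing_Nil: "noncrossing []"
| noncrossing_Cons: "noncrossing \<sigma> \<Longrightarrow> noncrossing \<tau> \<Longrightarrow> r \<notin> set \<sigma> \<Longrightarrow> r \<notin> set \<tau>
    \<Longrightarrow> set \<sigma> \<inter> set \<tau> = {} \<Longrightarrow> noncrossing (r # \<sigma> @ r # \<tau>)"

lemma avoids_1212_2121_infix:
  assumes "avoids_1212_2121 (a @ b @ c)"
  shows "avoids_1212_2121 b"
  unfolding avoids_1212_2121_def
proof (rule notI, elim exE conjE)
  fix i j k l
  assume h: "i < j" "j < k" "k < l" "l < length b" "b ! i = b ! k" "b ! j = b ! l"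
  have nth: "(a @ b @ c) ! (length a + p) = b ! p" if "p < length b" for p
    using that by (simp add: nth_append)
  have "i + length a < j + length a \<and> j + length a < k + length a \<and> k + length a < l + length a \<and>
        l + length a < length (a @ b @ c) \<and>
        (a @ b @ c) ! (i + length a) = (a @ b @ c) ! (k + length a) \<and>
        (a @ b @ c) ! (j + length a) = (a @ b @ c) ! (l + length a)"
    using h nth[of i] nth[of j] nth[of k] nth[of l] by (simp add: add.commute)
  then show False using assms unfolding avoids_1212_2121_def by blast
qed

lemma avoids_1212_2121_append:
  assumes "avoids_1212_2121 xs" "avoids_1212_2121 ys" "set xs \<inter> set ys = {}"
  shows "avoids_1212_2121 (xs @ ys)"
  unfolding avoids_1212_2121_def
proof (rule notI, elim exE conjE)
  fix i j k l
  let ?p = "xs @ ys" and ?n = "length xs"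
  assume h: "i < j" "j < k" "k < l" "l < length ?p" "?p ! i = ?p ! k" "?p ! j = ?p ! l"
  have inx: "?p ! p = xs ! p \<and> xs ! p \<in> set xs" if "p < ?n" for p
    using that by (simp add: nth_append)
  have iny: "?p ! p = ys ! (p - ?n) \<and> ys ! (p - ?n) \<in> set ys" if "?n \<le> p" "p < length ?p" for p
    using that by (simp add: nth_append)
  show False
  proof (cases "l < ?n")
    case True
    then have "i < j \<and> j < k \<and> k < l \<and> l < length xs \<and> xs ! i = xs ! k \<and> xs ! j = xs ! l"
      using h inx[of i] inx[of j] inx[of k] inx[of l] by simp
    then show False using assms(1) unfolding avoids_1212_2121_def by blast
  next
    case l: False
    show False
    proof (cases "?n \<le> i")
      case True
      then have "i - ?n < j - ?n \<and> j - ?n < k - ?n \<and> k - ?n < l - ?n \<and> l - ?n < length ys \<and>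
          ys ! (i - ?n) = ys ! (k - ?n) \<and> ys ! (j - ?n) = ys ! (l - ?n)"
        using h iny[of i] iny[of j] iny[of k] iny[of l] by (simp add: less_diff_iff)
      then show False using assms(2) unfolding avoids_1212_2121_def by blast
    next
      case i: False
      show False
      proof (cases "k < ?n")
        case True
        then have "?p ! j \<in> set xs" using inx[of j] h by simp
        moreover have "?p ! l \<in> set ys" using iny[of l] h l by simp
        ultimately show False using h assms(3) by auto
      next
        case False
        then have "?p ! i \<in> set xs" using inx[of i] i by simp
        moreover have "?p ! k \<in> set ys" using iny[of k] h False by simp
        ultimately show False using h assms(3) by auto
      qed
    qed
  qed
qed

lemma avoids_1212_2121_enclose:
  assumes "avoids_1212_2121 \<sigma>" "r \<notin> set \<sigma>"
  shows "avoids_1212_2121 (r # \<sigma> @ [r])"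
  unfolding avoids_1212_2121_def
proof (rule notI, elim exE conjE)
  fix i j k l
  let ?p = "r # \<sigma> @ [r]" and ?n = "length \<sigma>"
  assume h: "i < j" "j < k" "k < l" "l < length ?p" "?p ! i = ?p ! k" "?p ! j = ?p ! l"
  have mid: "?p ! p = \<sigma> ! (p - 1) \<and> \<sigma> ! (p - 1) \<in> set \<sigma>" if "0 < p" "p \<le> ?n" for p
    using that by (cases p) (auto simp: nth_append)
  have last: "?p ! (Suc ?n) = r" by (simp add: nth_append)
  have l: "l \<le> ?n"
  proof (rule ccontr)
    assume "\<not> l \<le> ?n"
    then have "l = Suc ?n" using h by simp
    then have "?p ! j = r" using h last by simp
    moreover have "0 < j" "j \<le> ?n" using h \<open>l = Suc ?n\<close> by auto
    ultimately show False using mid[of j] assms(2) by auto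
  qed
  have i: "0 < i"
  proof (rule ccontr)
    assume "\<not> 0 < i"
    then have "?p ! k = r" using h by simp
    moreover have "0 < k" "k \<le> ?n" using h l by auto
    ultimately show False using mid[of k] assms(2) by auto
  qed
  have "i - 1 < j - 1 \<and> j - 1 < k - 1 \<and> k - 1 < l - 1 \<and> l - 1 < length \<sigma> \<and>
      \<sigma> ! (i - 1) = \<sigma> ! (k - 1) \<and> \<sigma> ! (j - 1) = \<sigma> ! (l - 1)"
  proof -
    have ar: "i - 1 < j - 1" "j - 1 < k - 1" "k - 1 < l - 1" "l - 1 < length \<sigma>"
      using h l i by linarith+
    have "0 < j" "0 < k" "0 < l" "i \<le> ?n" "j \<le> ?n" "k \<le> ?n" using h l i by linarith+
    then show ?thesis using ar h mid[of i] mid[of j] mid[of k] mid[of l] i l by simp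
  qed
  then show False using assms(1) unfolding avoids_1212_2121_def by blast
qed

lemma avoids_1212_2121_disjoint:
  assumes "avoids_1212_2121 (r # \<sigma> @ r # \<tau>)"
  shows "set \<sigma> \<inter> set \<tau> = {}"
proof (rule equals0I)
  fix x assume "x \<in> set \<sigma> \<inter> set \<tau>"
  then obtain a b where a: "a < length \<sigma>" "\<sigma> ! a = x" and b: "b < length \<tau>" "\<tau> ! b = x"
    by (auto simp: in_set_conv_nth)
  \<comment> \<open>r, then x in \<sigma>, then r, then x in \<tau> is an occurrence of 1212\<close>
  let ?\<pi> = "r # \<sigma> @ r # \<tau>"
  have "0 < Suc a \<and> Suc a < Suc (length \<sigma>) \<and> Suc (length \<sigma>) < length \<sigma> + 2 + b \<and>
        length \<sigma> + 2 + b < length ?\<pi> \<and> ?\<pi> ! 0 = ?\<pi> ! Suc (length \<sigma>) \<and>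
        ?\<pi> ! Suc a = ?\<pi> ! (length \<sigma> + 2 + b)"
    using a b by (simp add: nth_append)
  then show False using assms unfolding avoids_1212_2121_def by blast
qed

lemma noncrossing_each_twice_avoids:
  "noncrossing \<pi> \<Longrightarrow> each_twice \<pi> \<and> avoids_1212_2121 \<pi>"
proof (induction rule: noncrossing.induct)
  case noncrossing_Nil
  then show ?case by (simp add: each_twice_def avoids_1212_2121_def)
next
  case (noncrossing_Cons \<sigma> \<tau> r)
  then have "avoids_1212_2121 ((r # \<sigma> @ [r]) @ \<tau>)"
    by (intro avoids_1212_2121_append[OF avoids_1212_2121_enclose]) auto
  moreover have "each_twice (r # \<sigma> @ r # \<tau>)"
    using noncrossing_Cons by (simp add: each_twice_Cons_iff)
  ultimately show ?case by simp
qed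

lemma noncrossing_if_each_twice_avoids:
  "each_twice \<pi> \<Longrightarrow> avoids_1212_2121 \<pi> \<Longrightarrow> noncrossing \<pi>"
proof (induction "length \<pi>" arbitrary: \<pi> rule: less_induct)
  case less
  show ?case
  proof (cases \<pi>)
    case (Cons r rest)
    have twice: "count (mset \<pi>) r = 2" using less.prems(1) Cons by (simp add: each_twice_def)
    then have "count (mset rest) r \<noteq> 0" using Cons by simp
    then have "r \<in> set rest" by (simp add: count_mset_0_iff)
    then obtain \<sigma> \<tau> where rest: "rest = \<sigma> @ r # \<tau>" and r\<sigma>: "r \<notin> set \<sigma>"
      by (meson split_list_first)
    have \<pi>: "\<pi> = r # \<sigma> @ r # \<tau>" using Cons rest by simp
    have "count (mset \<tau>) r = 0" using twice r\<sigma> \<pi> by (simp add: count_mset_0_iff)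
    then have r\<tau>: "r \<notin> set \<tau>" by (simp add: count_mset_0_iff)
    have disjoint: "set \<sigma> \<inter> set \<tau> = {}"
      using less.prems(2) by (simp add: \<pi> avoids_1212_2121_disjoint)
    have "each_twice \<sigma>" "each_twice \<tau>"
      using less.prems(1) r\<sigma> r\<tau> disjoint by (simp_all add: \<pi> each_twice_Cons_iff)
    moreover have "avoids_1212_2121 \<sigma>" "avoids_1212_2121 \<tau>"
      using avoids_1212_2121_infix[of "[r]" \<sigma> "r # \<tau>"] avoids_1212_2121_infix[of "r # \<sigma> @ [r]" \<tau> "[]"]
        less.prems(2) by (simp_all add: \<pi>)
    ultimately have "noncrossing \<sigma>" "noncrossing \<tau>"
      using less.hyps \<pi> by auto
    then show ?thesis unfolding \<pi> using r\<sigma> r\<tau> disjoint by (rule noncrossing_Cons)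
  qed (simp add: noncrossing_Nil)
qed

lemma noncrossing_iff: "noncrossing \<pi> \<longleftrightarrow> each_twice \<pi> \<and> avoids_1212_2121 \<pi>"
  using noncrossing_each_twice_avoids noncrossing_if_each_twice_avoids by blast

section \<open>Descents of cyclic words\<close>

(* The descents of xs @ [q] at the positions of xs; thus des_ending (q # xs) q counts the
   descents of the cyclic word q xs. *)
fun des_ending :: "nat list \<Rightarrow> nat \<Rightarrow> nat" where
  "des_ending [] q = 0"
| "des_ending (x # xs) q = of_bool (hd (xs @ [q]) < x) + des_ending xs q"

lemma des_ending_append: "des_ending (xs @ ys) q = des_ending xs (hd (ys @ [q])) + des_ending ys q"
  by (induction xs) (auto simp: hd_append)

lemma des_ending_eq_card: "des_ending xs q = card {i. i < length xs \<and> (xs @ [q]) ! Suc i < xs ! i}"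
proof (induction xs)
  case (Cons x xs)
  let ?D = "\<lambda>ys. {i. i < length ys \<and> (ys @ [q]) ! Suc i < ys ! i}"
  have "?D (x # xs) = (if hd (xs @ [q]) < x then {0} else {}) \<union> Suc ` ?D xs"
    by (auto simp: image_iff less_Suc_eq_0_disj hd_conv_nth)
  then have "card (?D (x # xs)) = of_bool (hd (xs @ [q]) < x) + card (?D xs)"
    by (simp add: card_image)
  then show ?case using Cons by simp
qed simp

lemma des_eq_des_ending:
  assumes "0 \<notin> set \<pi>"
  shows "des \<pi> = des_ending \<pi> 0"
proof -
  have "i = length \<pi> - 1 \<or> \<pi> ! i > \<pi> ! (i + 1) \<longleftrightarrow> (\<pi> @ [0]) ! Suc i < \<pi> ! i"
    if "i < length \<pi>" for i
  proof -
    have "0 < \<pi> ! i" using assms that nth_mem by (metis gr0I)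
    then show ?thesis using that by (cases "Suc i = length \<pi>") (auto simp: nth_append)
  qed
  then show ?thesis unfolding des_def des_ending_eq_card by (metis (lifting))
qed

(* a precedes b when the values are read cyclically downwards from q:
   q - 1, q - 2, ..., 0, then from the largest value down to q + 1. *)
definition cyc_before :: "nat \<Rightarrow> nat \<Rightarrow> nat \<Rightarrow> bool" where
  "cyc_before q a b \<longleftrightarrow> (b < q, b) < (a < q, a)"

lemma cyc_before_trans: "cyc_before q a b \<Longrightarrow> cyc_before q b c \<Longrightarrow> cyc_before q a c"
  unfolding cyc_before_def by (rule less_trans)

lemma cyc_before_asym: "cyc_before q a b \<Longrightarrow> \<not> cyc_before q b a"
  unfolding cyc_before_def using less_not_sym by blast

lemma des_two_steps:
  fixes q r h :: nat
  assumes "r \<noteq> q" "h \<noteq> r"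
  shows "of_bool (r < q) + of_bool (h < r) \<le> 1 + (of_bool (h < q) :: nat)"
    and "of_bool (r < q) + of_bool (h < r) = 1 + (of_bool (h < q) :: nat) \<longleftrightarrow> h = q \<or> cyc_before q r h"
  using assms by (auto simp: cyc_before_def)

lemma first_occurrence_unique:
  "r \<notin> set \<sigma> \<Longrightarrow> r \<notin> set \<sigma>' \<Longrightarrow> \<sigma> @ r # \<tau> = \<sigma>' @ r # \<tau>' \<Longrightarrow> \<sigma> = \<sigma>' \<and> \<tau> = \<tau>'"
  by (induction \<sigma> arbitrary: \<sigma>') (auto simp: Cons_eq_append_conv)

(* The noncrossing words \<pi> for which the cyclic word q \<pi> has as many descents as \<pi> has letters,
   see cyclic_des_bound. *)
inductive des_maximal :: "nat \<Rightarrow> nat list \<Rightarrow> bool" where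
  des_maximal_Nil: "des_maximal q []"
| des_maximal_Cons: "des_maximal r \<sigma> \<Longrightarrow> des_maximal q \<tau> \<Longrightarrow> r \<noteq> q \<Longrightarrow> q \<notin> set \<sigma> \<Longrightarrow> r \<notin> set \<tau>
    \<Longrightarrow> set \<sigma> \<inter> set \<tau> = {} \<Longrightarrow> \<tau> = [] \<or> cyc_before q r (hd \<tau>) \<Longrightarrow> des_maximal q (r # \<sigma> @ r # \<tau>)"

lemma des_maximal_notin: "des_maximal q \<pi> \<Longrightarrow> q \<notin> set \<pi>"
  by (induction rule: des_maximal.induct) auto

lemma des_maximal_noncrossing: "des_maximal q \<pi> \<Longrightarrow> noncrossing \<pi>"
  by (induction rule: des_maximal.induct) (auto intro: noncrossing.intros dest: des_maximal_notin)

lemma des_maximal_Cons_iff: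
  assumes "r \<notin> set \<sigma>"
  shows "des_maximal q (r # \<sigma> @ r # \<tau>) \<longleftrightarrow> des_maximal r \<sigma> \<and> des_maximal q \<tau> \<and> r \<noteq> q \<and> q \<notin> set \<sigma>
    \<and> r \<notin> set \<tau> \<and> set \<sigma> \<inter> set \<tau> = {} \<and> (\<tau> = [] \<or> cyc_before q r (hd \<tau>))"
proof
  assume "des_maximal q (r # \<sigma> @ r # \<tau>)"
  then show "des_maximal r \<sigma> \<and> des_maximal q \<tau> \<and> r \<noteq> q \<and> q \<notin> set \<sigma>
    \<and> r \<notin> set \<tau> \<and> set \<sigma> \<inter> set \<tau> = {} \<and> (\<tau> = [] \<or> cyc_before q r (hd \<tau>))"
  proof cases
    case (des_maximal_Cons \<sigma>' \<tau>')
    have "r \<notin> set \<sigma>'" using des_maximal_Cons(2) by (rule des_maximal_notin)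
    then have "\<sigma>' = \<sigma> \<and> \<tau>' = \<tau>"
      using assms des_maximal_Cons(1) first_occurrence_unique by metis
    then show ?thesis using des_maximal_Cons by simp
  qed
qed (auto intro: des_maximal_Cons)

theorem cyclic_des_bound:
  "noncrossing \<pi> \<Longrightarrow> q \<notin> set \<pi> \<Longrightarrow>
    des_ending (q # \<pi>) q \<le> card (set \<pi>) \<and> (des_ending (q # \<pi>) q = card (set \<pi>) \<longleftrightarrow> des_maximal q \<pi>)"
proof (induction \<pi> arbitrary: q rule: noncrossing.induct)
  case noncrossing_Nil
  then show ?case by (simp add: des_maximal_Nil)
next
  case (noncrossing_Cons \<sigma> \<tau> r)
  let ?h = "hd (\<tau> @ [q])"
  have q: "r \<noteq> q" "q \<notin> set \<sigma>" "q \<notin> set \<tau>" using noncrossing_Cons.prems by auto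
  have IH\<sigma>: "des_ending (r # \<sigma>) r \<le> card (set \<sigma>)
      \<and> (des_ending (r # \<sigma>) r = card (set \<sigma>) \<longleftrightarrow> des_maximal r \<sigma>)"
    using noncrossing_Cons.IH(1) noncrossing_Cons.hyps(3) by blast
  have IH\<tau>: "des_ending (q # \<tau>) q \<le> card (set \<tau>)
      \<and> (des_ending (q # \<tau>) q = card (set \<tau>) \<longleftrightarrow> des_maximal q \<tau>)"
    using noncrossing_Cons.IH(2) q by blast
  \<comment> \<open>the cyclic word q r \<sigma> r \<tau> splits into the cyclic words r \<sigma> and q \<tau>, up to the steps q r and r ?h\<close>
  have split: "des_ending (q # r # \<sigma> @ r # \<tau>) q + of_bool (?h < q)
      = of_bool (r < q) + of_bool (?h < r) + des_ending (r # \<sigma>) r + des_ending (q # \<tau>) q"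
    using des_ending_append[of "r # \<sigma>" "r # \<tau>" q] by simp
  have card: "card (set (r # \<sigma> @ r # \<tau>)) = 1 + card (set \<sigma>) + card (set \<tau>)"
    using noncrossing_Cons.hyps(3-5) by (simp add: card_insert_if card_Un_disjoint)
  have h: "?h \<noteq> r" "?h = q \<longleftrightarrow> \<tau> = []" "\<tau> \<noteq> [] \<Longrightarrow> ?h = hd \<tau>"
    using noncrossing_Cons.hyps(4) q by (cases \<tau>; simp)+
  have max: "des_maximal q (r # \<sigma> @ r # \<tau>) \<longleftrightarrow> des_maximal r \<sigma> \<and> des_maximal q \<tau> \<and> (?h = q \<or> cyc_before q r ?h)"
    using des_maximal_Cons_iff[OF noncrossing_Cons.hyps(3)] q noncrossing_Cons.hyps(4,5) h by auto
  show ?case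
    using split card IH\<sigma> IH\<tau> des_two_steps[OF q(1) h(1)] max by linarith
qed

section \<open>Extremal words as rooted trees\<close>

(* In a noncrossing word, the parent of a letter is the nearest letter whose two occurrences
   enclose it, or q if there is none. *)
function parent :: "'a \<Rightarrow> 'a list \<Rightarrow> 'a \<Rightarrow> 'a" where
  "parent q [] = (\<lambda>_. undefined)"
| "parent q (r # rest) = (\<lambda>x. if x = r then q
      else if x \<in> set (takeWhile (\<lambda>y. y \<noteq> r) rest) then parent r (takeWhile (\<lambda>y. y \<noteq> r) rest) x
      else parent q (tl (dropWhile (\<lambda>y. y \<noteq> r) rest)) x)"
  by pat_completeness auto
termination
proof (relation "measure (\<lambda>(q, xs). length xs)")
  fix q r and rest :: "'a list"
  show "((r, takeWhile (\<lambda>y. y \<noteq> r) rest), q, r # rest) \<in> measure (\<lambda>(q, xs). length xs)"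
    using length_takeWhile_le[of "\<lambda>y. y \<noteq> r" rest] by simp
  show "((q, tl (dropWhile (\<lambda>y. y \<noteq> r) rest)), q, r # rest) \<in> measure (\<lambda>(q, xs). length xs)"
    using length_dropWhile_le[of "\<lambda>y. y \<noteq> r" rest] by simp
qed simp

lemma parent_Cons:
  assumes "r \<notin> set \<sigma>"
  shows "parent q (r # \<sigma> @ r # \<tau>)
    = (\<lambda>x. if x = r then q else if x \<in> set \<sigma> then parent r \<sigma> x else parent q \<tau> x)"
proof -
  have "takeWhile (\<lambda>y. y \<noteq> r) (\<sigma> @ r # \<tau>) = \<sigma>" "dropWhile (\<lambda>y. y \<noteq> r) (\<sigma> @ r # \<tau>) = r # \<tau>"
    using assms by (induction \<sigma>) auto
  then show ?thesis unfolding parent.simps(2) by (simp only: list.sel(3))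
qed

declare parent.simps(2) [simp del]

lemma parent_notin: "x \<notin> set \<pi> \<Longrightarrow> parent q \<pi> x = undefined"
proof (induction q \<pi> rule: parent.induct)
  case (2 q r rest)
  have "set (tl (dropWhile (\<lambda>y. y \<noteq> r) rest)) \<subseteq> set rest"
    by (metis list.set_sel(2) set_dropWhileD subsetI tl_Nil)
  then show ?case using 2 by (auto simp: parent.simps(2) dest: set_takeWhileD)
qed simp

lemma restrict_parent_Cons:
  assumes "r \<notin> set \<sigma>" "r \<notin> set \<tau>" "set \<sigma> \<inter> set \<tau> = {}"
  shows "restrict (parent q (r # \<sigma> @ r # \<tau>)) (set \<sigma>) = parent r \<sigma>"
    and "restrict (parent q (r # \<sigma> @ r # \<tau>)) (set \<tau>) = parent q \<tau>"
  using assms by (auto simp: parent_Cons parent_notin fun_eq_iff)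

lemma parent_Cons_eq:
  assumes "r \<notin> set \<sigma>" "f r = q" "f \<in> extensional (insert r (set \<sigma> \<union> set \<tau>))"
    and "parent r \<sigma> = restrict f (set \<sigma>)" "parent q \<tau> = restrict f (set \<tau>)"
  shows "parent q (r # \<sigma> @ r # \<tau>) = f"
  using assms by (auto simp: parent_Cons fun_eq_iff extensional_def)

lemma parent_in_forests: "des_maximal q \<pi> \<Longrightarrow> parent q \<pi> \<in> forests (set \<pi>) {q}"
proof (induction rule: des_maximal.induct)
  case (des_maximal_Nil q)
  then show ?case by (simp add: forests_empty)
next
  case (des_maximal_Cons r \<sigma> q \<tau>)
  have "r \<notin> set \<sigma>" using des_maximal_Cons.hyps(1) by (rule des_maximal_notin)
  moreover have "set (r # \<sigma> @ r # \<tau>) = insert r (set \<sigma> \<union> set \<tau>)" by auto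
  ultimately show ?case
    using forest_graft[OF des_maximal_Cons.IH, of q] des_maximal_Cons.hyps by (simp add: parent_Cons)
qed

lemma parent_hd:
  assumes "des_maximal q \<pi>" "\<pi> \<noteq> []"
  shows "parent q \<pi> (hd \<pi>) = q"
  using assms by (cases rule: des_maximal.cases) (auto simp: parent_Cons dest: des_maximal_notin)

lemma des_maximal_root:
  "des_maximal q \<pi> \<Longrightarrow> x \<in> set \<pi> \<Longrightarrow> parent q \<pi> x = q \<Longrightarrow> x = hd \<pi> \<or> cyc_before q (hd \<pi>) x"
proof (induction arbitrary: x rule: des_maximal.induct)
  case (des_maximal_Cons r \<sigma> q \<tau>)
  have r\<sigma>: "r \<notin> set \<sigma>" using des_maximal_Cons.hyps(1) by (rule des_maximal_notin)
  consider "x = r" | "x \<in> set \<sigma>" | "x \<in> set \<tau>" "x \<noteq> r" "x \<notin> set \<sigma>"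
    using des_maximal_Cons.prems(1) by auto
  then show ?case
  proof cases
    case 2
    then have "parent r \<sigma> x \<in> set \<sigma> \<union> {r}" "x \<noteq> r"
      using parent_in_forests[OF des_maximal_Cons.hyps(1)] r\<sigma> by (auto simp: forests_def)
    then show ?thesis
      using 2 des_maximal_Cons.prems(2) des_maximal_Cons.hyps(3,4) r\<sigma> by (auto simp: parent_Cons)
  next
    case 3
    then have "x = hd \<tau> \<or> cyc_before q (hd \<tau>) x"
      using des_maximal_Cons.IH(2) des_maximal_Cons.prems(2) r\<sigma> by (simp add: parent_Cons)
    then show ?thesis using 3 des_maximal_Cons.hyps(7) by (auto intro: cyc_before_trans)
  qed simp
qed simp

lemma descendants_parent:
  assumes "des_maximal q (r # \<sigma> @ r # \<tau>)" "r \<notin> set \<sigma>"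
  shows "descendants (parent q (r # \<sigma> @ r # \<tau>)) (set (r # \<sigma> @ r # \<tau>)) r = set \<sigma>"
proof -
  have h: "des_maximal r \<sigma>" "des_maximal q \<tau>" "r \<noteq> q" "q \<notin> set \<sigma>" "r \<notin> set \<tau>" "set \<sigma> \<inter> set \<tau> = {}"
    using assms des_maximal_Cons_iff by blast+
  have "set (r # \<sigma> @ r # \<tau>) = insert r (set \<sigma> \<union> set \<tau>)" by auto
  then show ?thesis
    using descendants_graft[OF parent_in_forests[OF h(1)] parent_in_forests[OF h(2)], of q] h assms(2)
    by (simp add: parent_Cons)
qed

lemma des_maximal_hd_unique:
  assumes "des_maximal q \<pi>" "des_maximal q \<pi>'" "set \<pi> = set \<pi>'" "parent q \<pi> = parent q \<pi>'" "\<pi> \<noteq> []"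
  shows "hd \<pi>' = hd \<pi>"
proof -
  have ne: "\<pi>' \<noteq> []" using assms(3,5) by auto
  have "hd \<pi>' \<in> set \<pi>" "parent q \<pi> (hd \<pi>') = q"
    using ne assms(3,4) parent_hd[OF assms(2) ne] by simp_all
  then have 1: "hd \<pi>' = hd \<pi> \<or> cyc_before q (hd \<pi>) (hd \<pi>')" by (rule des_maximal_root[OF assms(1)])
  have "hd \<pi> \<in> set \<pi>'" "parent q \<pi>' (hd \<pi>) = q"
    using assms(3,4,5) parent_hd[OF assms(1,5)] by (metis list.set_sel(1), simp)
  then have 2: "hd \<pi> = hd \<pi>' \<or> cyc_before q (hd \<pi>') (hd \<pi>)" by (rule des_maximal_root[OF assms(2)])
  from 1 2 show ?thesis by (auto dest: cyc_before_asym)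
qed

lemma des_maximal_parent_inj:
  "des_maximal q \<pi> \<Longrightarrow> des_maximal q \<pi>' \<Longrightarrow> set \<pi> = set \<pi>' \<Longrightarrow> parent q \<pi> = parent q \<pi>' \<Longrightarrow> \<pi> = \<pi>'"
proof (induction arbitrary: \<pi>' rule: des_maximal.induct)
  case (des_maximal_Cons r \<sigma> q \<tau>)
  let ?\<pi> = "r # \<sigma> @ r # \<tau>"
  have max: "des_maximal q ?\<pi>" using des_maximal_Cons.hyps by (rule des_maximal.des_maximal_Cons)
  have r\<sigma>: "r \<notin> set \<sigma>" using des_maximal_Cons.hyps(1) by (rule des_maximal_notin)
  obtain r' \<sigma>' \<tau>' where \<pi>': "\<pi>' = r' # \<sigma>' @ r' # \<tau>'" and r'\<sigma>': "r' \<notin> set \<sigma>'"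
    and max': "des_maximal r' \<sigma>'" "des_maximal q \<tau>'" "r' \<notin> set \<tau>'" "set \<sigma>' \<inter> set \<tau>' = {}"
    using des_maximal_Cons.prems(1,2) by cases (auto dest: des_maximal_notin)
  note set_eq = des_maximal_Cons.prems(2) and parent_eq = des_maximal_Cons.prems(3)
  have r: "r' = r"
    using des_maximal_hd_unique[OF max des_maximal_Cons.prems] by (simp add: \<pi>')
  have \<sigma>: "set \<sigma>' = set \<sigma>"
    using descendants_parent[OF max r\<sigma>] descendants_parent[OF des_maximal_Cons.prems(1)[unfolded \<pi>'] r'\<sigma>']
      set_eq parent_eq by (simp add: \<pi>' r)
  have "set \<tau> = set \<pi>' - insert r (set \<sigma>)"
    using r\<sigma> des_maximal_Cons.hyps(5,6) set_eq[symmetric] by auto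
  moreover have "set \<tau>' = set \<pi>' - insert r (set \<sigma>)"
    using r'\<sigma>' max'(3,4) \<pi>' \<sigma> r by auto
  ultimately have \<tau>: "set \<tau>' = set \<tau>" by simp
  have "\<sigma> = \<sigma>'"
  proof (rule des_maximal_Cons.IH(1))
    show "parent r \<sigma> = parent r \<sigma>'"
      using restrict_parent_Cons(1)[OF r\<sigma> des_maximal_Cons.hyps(5,6), of q]
        restrict_parent_Cons(1)[OF r'\<sigma>' max'(3,4), of q] parent_eq \<sigma> r \<pi>' by simp
  qed (use max'(1) \<sigma> r in simp_all)
  moreover have "\<tau> = \<tau>'"
  proof (rule des_maximal_Cons.IH(2))
    show "parent q \<tau> = parent q \<tau>'"
      using restrict_parent_Cons(2)[OF r\<sigma> des_maximal_Cons.hyps(5,6), of q]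
        restrict_parent_Cons(2)[OF r'\<sigma>' max'(3,4), of q] parent_eq \<tau> r \<pi>' by simp
  qed (use max'(2) \<tau> in simp_all)
  ultimately show ?case using \<pi>' r by simp
qed simp

lemma finite_has_cyc_first:
  assumes "finite R" "R \<noteq> {}"
  shows "\<exists>r\<in>R. \<forall>x\<in>R. x \<noteq> r \<longrightarrow> cyc_before q r x"
proof -
  let ?key = "\<lambda>x. (x < q, x)"
  have "Max (?key ` R) \<in> ?key ` R" using assms by (intro Max_in) auto
  then obtain r where r: "r \<in> R" "?key r = Max (?key ` R)" by force
  have "cyc_before q r x" if "x \<in> R" "x \<noteq> r" for x
  proof -
    have "?key x \<le> ?key r" using r assms that by simp
    moreover have "?key x \<noteq> ?key r" using that by simp
    ultimately have "?key x < ?key r" by (rule le_neq_trans)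
    then show ?thesis unfolding cyc_before_def .
  qed
  then show ?thesis using r(1) by blast
qed

lemma forest_first_root:
  assumes "f \<in> forests S {q}" "q \<notin> S" "finite S" "S \<noteq> {}"
  shows "\<exists>r\<in>S. f r = q \<and> (\<forall>x\<in>S. f x = q \<longrightarrow> x \<noteq> r \<longrightarrow> cyc_before q r x)"
proof -
  obtain x where x: "x \<in> S" using assms(4) by blast
  then have "reaches f S {q} x" "x \<notin> {q}" using assms(1,2) by (auto simp: forests_def)
  then obtain y where "y \<in> S" "f y \<in> {q}" using reaches_exit[of f S "{q}" x] by blast
  then have "{x \<in> S. f x = q} \<noteq> {}" by auto
  moreover have "finite {x \<in> S. f x = q}" using assms(3) by simp
  ultimately obtain r where "r \<in> {x \<in> S. f x = q}" "\<forall>x\<in>{x \<in> S. f x = q}. x \<noteq> r \<longrightarrow> cyc_before q r x"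
    using finite_has_cyc_first by blast
  then show ?thesis by blast
qed

lemma des_maximal_parent_surj:
  "finite S \<Longrightarrow> q \<notin> S \<Longrightarrow> f \<in> forests S {q} \<Longrightarrow> \<exists>\<pi>. des_maximal q \<pi> \<and> set \<pi> = S \<and> parent q \<pi> = f"
proof (induction "card S" arbitrary: S q f rule: less_induct)
  case less
  show ?case
  proof (cases "S = {}")
    case True
    then show ?thesis using less.prems(3) by (auto simp: forests_empty intro: des_maximal_Nil)
  next
    case False
    obtain r where r: "r \<in> S" "f r = q" and first: "\<forall>x\<in>S. f x = q \<longrightarrow> x \<noteq> r \<longrightarrow> cyc_before q r x"
      using forest_first_root[OF less.prems(3,2,1) False] by blast
    define D where "D = descendants f S r"
    define E where "E = S - insert r D"
    have DE: "D \<subseteq> S" "E \<subseteq> S" "r \<notin> D" "r \<notin> E" "D \<inter> E = {}" "S = insert r (D \<union> E)"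
      using r by (auto simp: D_def E_def descendants_def)
    have "restrict f D \<in> forests D {r}" "restrict f E \<in> forests E {q}"
      using forest_prune[OF less.prems(3) r(1)] less.prems(2) by (simp_all add: D_def E_def)
    moreover have "D \<subset> S" "E \<subset> S" using DE by auto
    then have "card D < card S" "card E < card S"
      using less.prems(1) by (simp_all add: psubset_card_mono)
    ultimately obtain \<sigma> \<tau> where
      \<sigma>: "des_maximal r \<sigma>" "set \<sigma> = D" "parent r \<sigma> = restrict f D" and
      \<tau>: "des_maximal q \<tau>" "set \<tau> = E" "parent q \<tau> = restrict f E"
      using less.hyps DE less.prems(1,2) by (metis finite_subset subsetD)
    have "cyc_before q r (hd \<tau>)" if "\<tau> \<noteq> []"
    proof -
      have "hd \<tau> \<in> E" using \<tau>(2) that by auto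
      moreover have "parent q \<tau> (hd \<tau>) = q" using parent_hd[OF \<tau>(1) that] .
      ultimately show ?thesis using first \<tau>(3) DE by auto
    qed
    then have "des_maximal q (r # \<sigma> @ r # \<tau>)"
      using \<sigma> \<tau> DE less.prems(2) r(1) by (intro des_maximal_Cons) auto
    moreover have "parent q (r # \<sigma> @ r # \<tau>) = f"
      using \<sigma> \<tau> DE r less.prems(3) by (intro parent_Cons_eq) (auto simp: forests_def PiE_def)
    ultimately show ?thesis using \<sigma>(2) \<tau>(2) DE by (intro exI[of _ "r # \<sigma> @ r # \<tau>"]) auto
  qed
qed

theorem card_des_maximal:
  assumes "finite S" "q \<notin> S"
  shows "card {\<pi>. des_maximal q \<pi> \<and> set \<pi> = S} = card (forests S {q})"
proof (rule bij_betw_same_card[of "parent q"], rule bij_betw_imageI)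
  show "inj_on (parent q) {\<pi>. des_maximal q \<pi> \<and> set \<pi> = S}"
    by (rule inj_onI) (auto intro: des_maximal_parent_inj)
  show "parent q ` {\<pi>. des_maximal q \<pi> \<and> set \<pi> = S} = forests S {q}"
    using parent_in_forests des_maximal_parent_surj[OF assms] by blast
qed

lemma quasi_stirling_des_iff:
  "quasi_stirling n \<pi> \<and> des \<pi> = n \<longleftrightarrow> des_maximal 0 \<pi> \<and> set \<pi> = {1..n}"
proof -
  have des: "des \<pi> = des_ending (0 # \<pi>) 0" if "0 \<notin> set \<pi>"
    using des_eq_des_ending[OF that] by simp
  show ?thesis
  proof
    assume "quasi_stirling n \<pi> \<and> des \<pi> = n"
    then have \<pi>: "set \<pi> = {1..n}" "noncrossing \<pi>" "des \<pi> = n"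
      by (auto simp: quasi_stirling_def is_perm_of_double_multiset_iff noncrossing_iff)
    then have "0 \<notin> set \<pi>" "des_ending (0 # \<pi>) 0 = card (set \<pi>)" using des by auto
    then show "des_maximal 0 \<pi> \<and> set \<pi> = {1..n}" using cyclic_des_bound \<pi> by blast
  next
    assume \<pi>: "des_maximal 0 \<pi> \<and> set \<pi> = {1..n}"
    then have nc: "noncrossing \<pi>" and "0 \<notin> set \<pi>" by (auto intro: des_maximal_noncrossing)
    then have "des_ending (0 # \<pi>) 0 = card (set \<pi>)" using cyclic_des_bound \<pi> by blast
    then have "des \<pi> = n" using des \<open>0 \<notin> set \<pi>\<close> \<pi> by simp
    then show "quasi_stirling n \<pi> \<and> des \<pi> = n"
      using \<pi> nc by (auto simp: quasi_stirling_def is_perm_of_double_multiset_iff noncrossing_iff)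
  qed
qed

theorem theorem2p2:
  fixes n :: nat
  assumes "n \<ge> 1"
  shows "card {\<pi>. quasi_stirling n \<pi> \<and> des \<pi> = n} = (n + 1) ^ (n - 1)"
proof -
  have "card {\<pi>. quasi_stirling n \<pi> \<and> des \<pi> = n} = card {\<pi>. des_maximal 0 \<pi> \<and> set \<pi> = {1..n}}"
    by (simp only: quasi_stirling_des_iff)
  also have "\<dots> = card (forests {1..n} {0})"
    by (rule card_des_maximal) auto
  also have "\<dots> = forest_count n 1"
    by (subst card_forests) auto
  also have "\<dots> = (n + 1) ^ (n - 1)"
    using assms by (simp add: forest_count_def)
  finally show ?thesis .
qed

end
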